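(* Let $f,g_1,g_2\in L^2(\mathbb{R}^2\times\mathbb{R})$ with $\|f\|_{L^2}=\|g_1\|_{L^2}=\|g_2\|_{L^2}=1$ and $\operatorname{supp}f\subset\mathfrak{P}_N\cap\mathfrak{W}^\pm_L$, $\operatorname{supp}g_k\subset\mathfrak{P}_{N_k}\cap\mathfrak{S}_{L_k}$ ($k=1,2$), where $1\le N_1\ll N_2$ or $1\le N_2\ll N_1$. Then for all dyadic $L,L_1,L_2\ge1$, $$\Big|\int f(\zeta_1-\zeta_2)g_1(\zeta_1)g_2(\zeta_2)\,d\zeta_1d\zeta_2\Big|\lesssim L_1^{5/12}L_2^{5/12}L^{5/12}N^{-1/2}\min\Big\{\frac{N_1}{N_2},\frac{N_2}{N_1}\Big\}^{1/6}.$$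
   Context: Points are $\zeta=(\xi,\tau)\in\mathbb{R}^2\times\mathbb{R}$. Dyadic numbers are $2^n$, $n\ge0$; $N,N_1,N_2$ are dyadic. $\mathfrak{P}_1=\{|\xi|\le2\}$, $\mathfrak{P}_N=\{N/2\le|\xi|\le2N\}$ ($N\ge2$); $\mathfrak{S}_1=\{|\tau+|\xi|^2|\le2\}$, $\mathfrak{S}_L=\{L/2\le|\tau+|\xi|^2|\le2L\}$; $\mathfrak{W}^\pm_1=\{|\tau\pm|\xi||\le2\}$, $\mathfrak{W}^\pm_L=\{L/2\le|\tau\pm|\xi||\le2L\}$ ($L\ge2$). $A\lesssim B$: $A\le cB$ with an absolute constant; $A\ll B$: $A\le cB$ with a sufficiently small absolute constant. *)

theory Defs
  imports "HOL-Analysis.Analysis"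
begin

type_synonym pt = "(real^2) \<times> real"

definition dyadic :: "real \<Rightarrow> bool" where
  "dyadic N \<longleftrightarrow> (\<exists>n::nat. N = 2 ^ n)"

definition Pset :: "real \<Rightarrow> pt set" where
  "Pset N = (if N = 1 then {z. norm (fst z) \<le> 2}
             else {z. N / 2 \<le> norm (fst z) \<and> norm (fst z) \<le> 2 * N})"

definition Sset :: "real \<Rightarrow> pt set" where
  "Sset L = (if L = 1 then {z. \<bar>snd z + norm (fst z) ^ 2\<bar> \<le> 2}
             else {z. L / 2 \<le> \<bar>snd z + norm (fst z) ^ 2\<bar> \<and> \<bar>snd z + norm (fst z) ^ 2\<bar> \<le> 2 * L})"

definition Wset :: "real \<Rightarrow> real \<Rightarrow> pt set" where
  "Wset s L = (if L = 1 then {z. \<bar>snd z + s * norm (fst z)\<bar> \<le> 2}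
             else {z. L / 2 \<le> \<bar>snd z + s * norm (fst z)\<bar> \<and> \<bar>snd z + s * norm (fst z)\<bar> \<le> 2 * L})"

definition unitL2_supp :: "(pt \<Rightarrow> complex) \<Rightarrow> pt set \<Rightarrow> bool" where
  "unitL2_supp f A \<longleftrightarrow> f \<in> borel_measurable lborel
     \<and> (\<integral>\<^sup>+ z. ennreal ((norm (f z))\<^sup>2) \<partial>lborel) = 1
     \<and> (\<forall>z. f z \<noteq> 0 \<longrightarrow> z \<in> A)"

end

theory Submission
  imports Defs
begin

(*
  Only absolute values matter, so the integral is bounded by the trilinear form
  T = \<integral>\<integral> |f(\<zeta>1 - \<zeta>2)| |g1(\<zeta>1)| |g2(\<zeta>2)|. By Cauchy-Schwarz, T\<^sup>2 is at most the largest
  measure of a fibre of the joint support over one of the three variables, and changes of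
  variables let the fibre be taken over any of them. Each fibre lies between two thickened graphs
  over an annulus in the \<xi>-plane, so its measure is (thickness) times (area where the graphs are
  close): for two paraboloids this set is a strip of width about L / N2, for a paraboloid and a
  cone a thin level set of |\<xi>|\<^sup>2 \<plusminus> |\<xi> - p| of area O(L). When N1 is much smaller than N2
  the three surfaces can only meet if N2\<^sup>2 = O(max(L1, L2, L)) and N = O(N2); splitting according
  to which modulation is largest and combining the three fibre bounds gives the exponents 5/12.
  The case N2 much smaller than N1 follows by exchanging \<zeta>1 and \<zeta>2, which reflects f and changes
  the sign of the cone.
*)

section \<open>Areas of planar sets by slicing\<close>

lemma UNIV_2_eq: "i \<noteq> (j::2) \<Longrightarrow> UNIV = {i, j}"
  using exhaust_2[of i] exhaust_2[of j] UNIV_2 by auto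

lemma all_2_iff: "i \<noteq> (j::2) \<Longrightarrow> (\<forall>k. P k) \<longleftrightarrow> P i \<and> P j"
  by (metis UNIV_2_eq UNIV_I insertE singletonD)

lemma inner_vec2: "i \<noteq> j \<Longrightarrow> (x::real^2) \<bullet> y = x$i * y$i + x$j * y$j"
  using exhaust_2[of i] exhaust_2[of j] by (auto simp: inner_vec_def sum_2)

lemma norm_vec2_sq: "i \<noteq> j \<Longrightarrow> (norm (x::real^2))\<^sup>2 = (x$i)\<^sup>2 + (x$j)\<^sup>2"
  unfolding power2_norm_eq_inner by (simp add: inner_vec2[of i j] power2_eq_square)

lemma prod_Basis_cart: "(\<Prod>b\<in>Basis. (v::real^'n) \<bullet> b) = (\<Prod>k\<in>UNIV. v$k)"
  by (simp add: Basis_vec_def cart_eq_inner_axis axis_eq_axis prod.UNION_disjoint)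

text \<open>Lebesgue measure on \<open>real^2\<close> is the image
  of \<open>lborel \<Otimes>\<^sub>M lborel\<close> under this map, so planar sets can be measured slice by slice.\<close>

definition vec2_at :: "2 \<Rightarrow> real \<times> real \<Rightarrow> real^2" where
  "vec2_at i = (\<lambda>(y, x). \<chi> k. if k = i then x else y)"

lemma vec2_at_nth [simp]: "vec2_at i (y, x) $ i = x" "j \<noteq> i \<Longrightarrow> vec2_at i (y, x) $ j = y"
  by (auto simp: vec2_at_def)

lemma measurable_vec2_at [measurable]: "vec2_at i \<in> borel_measurable (lborel \<Otimes>\<^sub>M lborel)"
proof -
  have "continuous_on UNIV (\<lambda>x::real \<times> real. if k = i then snd x else fst x)" for k
    by (cases "k = i") (auto intro: continuous_on_fst continuous_on_snd continuous_on_id)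
  then have "continuous_on UNIV (vec2_at i)"
    unfolding vec2_at_def case_prod_beta if_distrib by (rule continuous_on_vec_lambda)
  then show ?thesis
    by (simp add: borel_measurable_continuous_onI lborel_prod)
qed

lemma distr_vec2_at: "distr (lborel \<Otimes>\<^sub>M lborel) borel (vec2_at i) = lborel"
proof (rule lborel_eqI[symmetric])
  fix l u :: "real^2"
  assume "\<And>b. b \<in> Basis \<Longrightarrow> l \<bullet> b \<le> u \<bullet> b"
  then have lu: "l$k \<le> u$k" for k
    by (auto simp: Basis_vec_def cart_eq_inner_axis)
  obtain j where j: "j \<noteq> i"
    by (metis one_neq_zero)
  have "vec2_at i (y, x) \<in> box l u \<longleftrightarrow> y \<in> {l$j<..<u$j} \<and> x \<in> {l$i<..<u$i}" for y x
    using j by (auto simp: mem_box_cart all_2_iff[OF j[symmetric]])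
  then have "vec2_at i -` box l u \<inter> space (lborel \<Otimes>\<^sub>M lborel) = {l$j<..<u$j} \<times> {l$i<..<u$i}"
    by (auto simp: space_pair_measure)
  then have "emeasure (distr (lborel \<Otimes>\<^sub>M lborel) borel (vec2_at i)) (box l u)
      = ennreal ((u$j - l$j) * (u$i - l$i))"
    using lu by (simp add: emeasure_distr lborel.emeasure_pair_measure_Times ennreal_mult)
  also have "(u$j - l$j) * (u$i - l$i) = (\<Prod>b\<in>Basis. (u - l) \<bullet> b)"
    using j by (simp add: prod_Basis_cart UNIV_2_eq[OF j])
  finally show "emeasure (distr (lborel \<Otimes>\<^sub>M lborel) borel (vec2_at i)) (box l u)
      = ennreal (\<Prod>b\<in>Basis. (u - l) \<bullet> b)" .
qed simp

lemma emeasure_plane_le_slices: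
  fixes S :: "(real^2) set"
  assumes S: "S \<in> sets borel" and ij: "i \<noteq> j" and "0 \<le> \<delta>"
    and range: "\<And>\<xi>. \<xi> \<in> S \<Longrightarrow> \<xi>$j \<in> {c..d}"
    and slice: "\<And>\<xi> \<eta>. \<xi> \<in> S \<Longrightarrow> \<eta> \<in> S \<Longrightarrow> \<xi>$j = \<eta>$j \<Longrightarrow> \<bar>\<xi>$i - \<eta>$i\<bar> \<le> \<delta>"
  shows "emeasure lborel S \<le> ennreal (2 * \<delta> * (d - c))"
proof -
  let ?P = "lborel \<Otimes>\<^sub>M lborel :: (real \<times> real) measure"
  let ?T = "vec2_at i -` S \<inter> space ?P"
  have slice_le: "emeasure lborel (Pair y -` ?T) \<le> ennreal (2 * \<delta>) * indicator {c..d} y" for y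
  proof (cases "Pair y -` ?T = {}")
    case False
    then obtain x0 where x0: "vec2_at i (y, x0) \<in> S"
      by (auto simp: space_pair_measure)
    have "Pair y -` ?T \<subseteq> {x0 - \<delta>..x0 + \<delta>}"
      using slice[OF _ x0] ij by (fastforce simp: space_pair_measure abs_le_iff)
    then have "emeasure lborel (Pair y -` ?T) \<le> ennreal (2 * \<delta>)"
      using emeasure_mono[of _ "{x0 - \<delta>..x0 + \<delta>}" lborel] \<open>0 \<le> \<delta>\<close> by fastforce
    moreover have "y \<in> {c..d}"
      using range[OF x0] ij by simp
    ultimately show ?thesis by simp
  qed simp
  have "emeasure lborel S = emeasure ?P ?T"
    using S by (subst distr_vec2_at[symmetric, of i]) (simp add: emeasure_distr)
  also have "\<dots> = (\<integral>\<^sup>+y. emeasure lborel (Pair y -` ?T) \<partial>lborel)"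
    using S by (intro lborel.emeasure_pair_measure_alt measurable_sets[OF measurable_vec2_at]) simp
  also have "\<dots> \<le> (\<integral>\<^sup>+y. ennreal (2 * \<delta>) * indicator {c..d} y \<partial>lborel)"
    by (intro nn_integral_mono slice_le)
  also have "\<dots> = ennreal (2 * \<delta> * (d - c))"
    using \<open>0 \<le> \<delta>\<close> by (auto simp: nn_integral_cmult_indicator emeasure_lborel_Icc_eq ennreal_mult intro!: ennreal_neg mult_nonneg_nonpos)
  finally show ?thesis .
qed

lemma cball_nth_bound:
  fixes q \<xi> :: "real^'n"
  shows "\<xi> \<in> cball q R \<Longrightarrow> \<bar>\<xi>$k - q$k\<bar> \<le> R"
  using dist_vec_nth_le[of q k \<xi>] by (simp add: dist_real_def abs_minus_commute)

lemma emeasure_plane_le_cball: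
  fixes S :: "(real^2) set"
  assumes "S \<in> sets borel" "S \<subseteq> cball q R" "0 \<le> R"
  shows "emeasure lborel S \<le> ennreal (8 * R\<^sup>2)"
proof -
  have "emeasure lborel S \<le> ennreal (2 * (2 * R) * ((q$2 + R) - (q$2 - R)))"
  proof (rule emeasure_plane_le_slices[of S 1 2])
    fix \<xi> \<eta> assume "\<xi> \<in> S" "\<eta> \<in> S"
    then have "\<bar>\<xi>$1 - q$1\<bar> \<le> R" "\<bar>\<eta>$1 - q$1\<bar> \<le> R"
      using cball_nth_bound assms(2) by blast+
    then show "\<bar>\<xi>$1 - \<eta>$1\<bar> \<le> 2 * R"
      by linarith
  next
    fix \<xi> assume "\<xi> \<in> S"
    then have "\<bar>\<xi>$2 - q$2\<bar> \<le> R"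
      using cball_nth_bound assms(2) by blast
    then show "\<xi>$2 \<in> {q$2 - R..q$2 + R}"
      by (simp add: abs_le_iff)
  qed (use assms in simp_all)
  then show ?thesis by (simp add: power2_eq_square)
qed

lemma exists_large_nth:
  fixes \<xi> :: "real^2"
  assumes "m \<le> norm \<xi>"
  obtains i where "m / 2 \<le> \<bar>\<xi>$i\<bar>"
proof (rule ccontr)
  assume "\<not> thesis"
  then have small: "\<bar>\<xi>$i\<bar> < m / 2" for i
    using that by (meson not_le)
  then have "(\<xi>$i)\<^sup>2 < m\<^sup>2 / 4" for i
    using power_strict_mono[of "\<bar>\<xi>$i\<bar>" "m / 2" 2] by (simp add: power_divide)
  moreover have "(norm \<xi>)\<^sup>2 = (\<xi>$1)\<^sup>2 + (\<xi>$2)\<^sup>2"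
    by (rule norm_vec2_sq) simp
  ultimately have "(norm \<xi>)\<^sup>2 < m\<^sup>2 / 2"
    using \<open>\<And>i. (\<xi>$i)\<^sup>2 < m\<^sup>2 / 4\<close>[of 1] \<open>\<And>i. (\<xi>$i)\<^sup>2 < m\<^sup>2 / 4\<close>[of 2] by linarith
  moreover have "m\<^sup>2 \<le> (norm \<xi>)\<^sup>2"
    using assms small[of 1] by (intro power_mono) auto
  ultimately show False
    using zero_le_power2[of "norm \<xi>"] by linarith
qed

lemma emeasure_plane_le_strip:
  fixes S :: "(real^2) set"
  assumes S: "S \<in> sets borel" and ball: "S \<subseteq> cball q R" and "0 \<le> R" "0 \<le> W"
    and m: "0 < m" "m \<le> norm \<xi>" and strip: "\<And>\<eta>. \<eta> \<in> S \<Longrightarrow> \<bar>c + \<xi> \<bullet> \<eta>\<bar> \<le> W"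
  shows "emeasure lborel S \<le> ennreal (16 * R * W / m)"
proof -
  obtain i where i: "m / 2 \<le> \<bar>\<xi>$i\<bar>"
    using exists_large_nth[OF m(2)] .
  obtain j where ij: "i \<noteq> j"
    by (metis one_neq_zero)
  have "emeasure lborel S \<le> ennreal (2 * (4 * W / m) * ((q$j + R) - (q$j - R)))"
  proof (rule emeasure_plane_le_slices[OF S ij])
    fix \<eta> \<eta>' assume \<eta>: "\<eta> \<in> S" "\<eta>' \<in> S" and "\<eta>$j = \<eta>'$j"
    then have "\<xi> \<bullet> \<eta> - \<xi> \<bullet> \<eta>' = \<xi>$i * (\<eta>$i - \<eta>'$i)"
      using ij by (simp add: inner_vec2[OF ij] algebra_simps)
    then have "\<bar>\<xi>$i\<bar> * \<bar>\<eta>$i - \<eta>'$i\<bar> \<le> 2 * W"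
      using strip[OF \<eta>(1)] strip[OF \<eta>(2)] by (simp add: abs_mult[symmetric] abs_le_iff)
    moreover have "m / 2 * \<bar>\<eta>$i - \<eta>'$i\<bar> \<le> \<bar>\<xi>$i\<bar> * \<bar>\<eta>$i - \<eta>'$i\<bar>"
      using i by (rule mult_right_mono) simp
    ultimately have "m / 2 * \<bar>\<eta>$i - \<eta>'$i\<bar> \<le> 2 * W"
      by linarith
    then show "\<bar>\<eta>$i - \<eta>'$i\<bar> \<le> 4 * W / m"
      using m by (simp add: field_simps)
  next
    fix \<eta> assume "\<eta> \<in> S"
    then have "\<bar>\<eta>$j - q$j\<bar> \<le> R"
      using cball_nth_bound ball by blast
    then show "\<eta>$j \<in> {q$j - R..q$j + R}"
      by (simp add: abs_le_iff)
  qed (use assms in simp_all)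
  also have "2 * (4 * W / m) * ((q$j + R) - (q$j - R)) = 16 * R * W / m"
    by (simp add: field_simps)
  finally show ?thesis .
qed

lemma level_set_slice_width:
  fixes \<eta> \<eta>' :: "real^2"
  assumes ij: "i \<noteq> j" and "\<eta>$j = \<eta>'$j" "\<bar>s\<bar> \<le> 1" "\<bar>\<sigma>\<bar> = 1" "1 \<le> h"
    and "h \<le> \<sigma> * \<eta>$i" "\<bar>(norm \<eta>)\<^sup>2 + s * norm (\<eta> - p) - t\<bar> \<le> W"
    and "h \<le> \<sigma> * \<eta>'$i" "\<bar>(norm \<eta>')\<^sup>2 + s * norm (\<eta>' - p) - t\<bar> \<le> W"
  shows "\<bar>\<eta>$i - \<eta>'$i\<bar> \<le> 2 * W / h"
proof -
  define x x' D where "x = \<eta>$i" and "x' = \<eta>'$i" and "D = \<bar>x - x'\<bar>"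
  have "(norm (\<eta> - \<eta>'))\<^sup>2 = D\<^sup>2"
    using \<open>\<eta>$j = \<eta>'$j\<close> by (simp add: norm_vec2_sq[OF ij] D_def x_def x'_def)
  then have "norm (\<eta> - \<eta>') = D"
    by (metis D_def abs_ge_zero norm_ge_zero power2_eq_iff_nonneg)
  then have "\<bar>norm (\<eta> - p) - norm (\<eta>' - p)\<bar> \<le> D"
    using norm_triangle_ineq3[of "\<eta> - p" "\<eta>' - p"] by simp
  then have "\<bar>s * (norm (\<eta> - p) - norm (\<eta>' - p))\<bar> \<le> 1 * D"
    unfolding abs_mult using \<open>\<bar>s\<bar> \<le> 1\<close> by (intro mult_mono) auto
  moreover have "(norm \<eta>)\<^sup>2 - (norm \<eta>')\<^sup>2 = x\<^sup>2 - x'\<^sup>2"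
    using \<open>\<eta>$j = \<eta>'$j\<close> by (simp add: norm_vec2_sq[OF ij] x_def x'_def)
  ultimately have "\<bar>x\<^sup>2 - x'\<^sup>2\<bar> \<le> 2 * W + D"
    using assms by (simp add: abs_le_iff algebra_simps)
  moreover have "\<bar>x\<^sup>2 - x'\<^sup>2\<bar> = D * \<bar>x + x'\<bar>"
    by (simp add: D_def abs_mult[symmetric] power2_eq_square algebra_simps)
  moreover have "2 * h \<le> \<bar>x + x'\<bar>"
  proof -
    have "2 * h \<le> \<sigma> * (x + x')"
      using assms by (simp add: x_def x'_def algebra_simps)
    also have "\<dots> \<le> \<bar>x + x'\<bar>"
      using \<open>\<bar>\<sigma>\<bar> = 1\<close> abs_ge_self[of "\<sigma> * (x + x')"] by (simp add: abs_mult)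
    finally show ?thesis .
  qed
  ultimately have "D * (2 * h) \<le> 2 * W + D"
    by (metis D_def abs_ge_zero mult_left_mono order_trans)
  moreover have "D * h \<le> D * (2 * h - 1)"
    using \<open>1 \<le> h\<close> by (intro mult_left_mono) (auto simp: D_def)
  ultimately have "D * h \<le> 2 * W"
    by (simp add: algebra_simps)
  then show ?thesis
    using \<open>1 \<le> h\<close> by (simp add: D_def x_def x'_def pos_le_divide_eq)
qed

lemma emeasure_level_set_piece:
  fixes S :: "(real^2) set"
  assumes S: "S \<in> sets borel" and "\<bar>s\<bar> \<le> 1" "\<bar>\<sigma>\<bar> = 1" "1 \<le> h" "0 \<le> W" "0 \<le> N"
    and sub: "\<And>\<eta>. \<eta> \<in> S \<Longrightarrow>
      norm \<eta> \<le> 2 * N \<and> h \<le> \<sigma> * \<eta>$i \<and> \<bar>(norm \<eta>)\<^sup>2 + s * norm (\<eta> - p) - t\<bar> \<le> W"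
  shows "emeasure lborel S \<le> ennreal (16 * N * W / h)"
proof -
  obtain j where ij: "i \<noteq> j"
    by (metis one_neq_zero)
  have "emeasure lborel S \<le> ennreal (2 * (2 * W / h) * (2 * N - (- 2 * N)))"
  proof (rule emeasure_plane_le_slices[OF S ij])
    fix \<eta> \<eta>' assume "\<eta> \<in> S" "\<eta>' \<in> S" "\<eta>$j = \<eta>'$j"
    then show "\<bar>\<eta>$i - \<eta>'$i\<bar> \<le> 2 * W / h"
      using sub assms by (intro level_set_slice_width[OF ij]) auto
  next
    fix \<eta> assume "\<eta> \<in> S"
    then have "\<bar>\<eta>$j\<bar> \<le> 2 * N"
      using sub component_le_norm_cart[of \<eta> j] by (meson order_trans)
    then show "\<eta>$j \<in> {- 2 * N..2 * N}"
      by (simp add: abs_le_iff)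
  qed (use assms in simp_all)
  also have "2 * (2 * W / h) * (2 * N - (- 2 * N)) = 16 * N * W / h"
    by (simp add: field_simps)
  finally show ?thesis .
qed

text \<open>The \<open>\<xi>\<close>-projection of \<open>Pset N\<close> for dyadic \<open>N\<close>.\<close>

definition annulus :: "real \<Rightarrow> (real^2) set" where
  "annulus N = {\<xi>. norm \<xi> \<le> 2 * N \<and> (2 \<le> N \<longrightarrow> N / 2 \<le> norm \<xi>)}"

lemma annulus_sets [measurable]: "annulus N \<in> sets borel"
  unfolding annulus_def by measurable

lemma annulus_subset_half_planes:
  assumes "2 \<le> N"
  shows "annulus N \<subseteq> (\<Union>(i, \<sigma>)\<in>UNIV \<times> {1, -1}. {\<xi>. N / 4 \<le> \<sigma> * \<xi>$i})"
proof
  fix \<xi> assume "\<xi> \<in> annulus N"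
  then obtain i where "N / 2 / 2 \<le> \<bar>\<xi>$i\<bar>"
    using assms exists_large_nth[of "N / 2" \<xi>] by (auto simp: annulus_def)
  then have "N / 4 \<le> 1 * \<xi>$i \<or> N / 4 \<le> (-1) * \<xi>$i"
    by (auto simp: abs_if split: if_splits)
  then show "\<xi> \<in> (\<Union>(i, \<sigma>)\<in>UNIV \<times> {1, -1}. {\<xi>. N / 4 \<le> \<sigma> * \<xi>$i})"
    by auto
qed

lemma emeasure_annulus_level_set:
  assumes "\<bar>s\<bar> \<le> 1" "1 \<le> N" "1 \<le> W"
  shows "emeasure lborel (annulus N \<inter> {\<xi>. \<bar>(norm \<xi>)\<^sup>2 + s * norm (\<xi> - p) - t\<bar> \<le> W})
    \<le> ennreal (2048 * W)"
    (is "emeasure lborel ?S \<le> _")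
proof (cases "N \<le> 8")
  case True
  have "emeasure lborel ?S \<le> ennreal (8 * (2 * N)\<^sup>2)"
    using assms by (intro emeasure_plane_le_cball[of _ 0]) (auto simp: annulus_def)
  also have "8 * (2 * N)\<^sup>2 \<le> 2048 * W"
    using True assms power_mono[of N 8 2] by simp
  finally show ?thesis
    by (simp add: ennreal_leI)
next
  case False
  define P where "P = (\<lambda>(i, \<sigma>). ?S \<inter> {\<xi>. N / 4 \<le> \<sigma> * \<xi>$i})"
  have P_sets: "P k \<in> sets borel" for k
    by (cases k) (simp add: P_def)
  have P_le: "emeasure lborel (P k) \<le> ennreal (64 * W)" if hk: "k \<in> UNIV \<times> {1, -1}" for k
  proof -
    obtain i \<sigma> where k: "k = (i, \<sigma>)" "\<sigma> \<in> {1, -1}"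
      using hk by (cases k) auto
    have "emeasure lborel (P k) \<le> ennreal (16 * N * W / (N / 4))"
      using assms False k
      by (intro emeasure_level_set_piece[OF P_sets, where s=s and p=p and t=t and i=i and \<sigma>=\<sigma>])
        (auto simp: P_def annulus_def)
    then show ?thesis
      using False by (simp add: field_simps)
  qed
  have "?S \<subseteq> (\<Union>k\<in>UNIV \<times> {1, -1}. P k)"
    using annulus_subset_half_planes[of N] False by (fastforce simp: P_def)
  then have "emeasure lborel ?S \<le> (\<Sum>k\<in>UNIV \<times> {1, -1}. emeasure lborel (P k))"
    by (intro order_trans[OF emeasure_mono emeasure_subadditive_finite]) (auto simp: P_sets)
  also have "\<dots> \<le> (\<Sum>k\<in>(UNIV :: 2 set) \<times> {1::real, -1}. ennreal (64 * W))"
    using P_le by (intro sum_mono) auto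
  also have "\<dots> = ennreal (256 * W)"
    using ennreal_mult'[of 4 "64 * W"] by (simp add: card_cartesian_product)
  also have "\<dots> \<le> ennreal (2048 * W)"
    using assms by (intro ennreal_leI) simp
  finally show ?thesis .
qed

section \<open>Thickened graphs and the trilinear form\<close>

lemma graph_nbhds_sets:
  fixes A :: "'a::euclidean_space set" and \<alpha> \<beta> :: "'a \<Rightarrow> real"
  assumes [measurable]: "A \<in> sets borel" "\<alpha> \<in> borel_measurable borel" "\<beta> \<in> borel_measurable borel"
  shows "{z. fst z \<in> A \<and> \<bar>snd z + \<alpha> (fst z)\<bar> \<le> w1 \<and> \<bar>snd z + \<beta> (fst z)\<bar> \<le> w2} \<in> sets lborel"
proof -
  have "{z \<in> space (lborel \<Otimes>\<^sub>M lborel). fst z \<in> A \<and> \<bar>snd z + \<alpha> (fst z)\<bar> \<le> w1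
      \<and> \<bar>snd z + \<beta> (fst z)\<bar> \<le> w2} \<in> sets (lborel \<Otimes>\<^sub>M lborel)"
    by measurable
  moreover have "{z \<in> space (lborel \<Otimes>\<^sub>M lborel). fst z \<in> A \<and> \<bar>snd z + \<alpha> (fst z)\<bar> \<le> w1
      \<and> \<bar>snd z + \<beta> (fst z)\<bar> \<le> w2} = {z. fst z \<in> A \<and> \<bar>snd z + \<alpha> (fst z)\<bar> \<le> w1 \<and> \<bar>snd z + \<beta> (fst z)\<bar> \<le> w2}"
    by (simp add: space_pair_measure)
  ultimately show ?thesis
    by (simp only: lborel_prod)
qed

lemma emeasure_graph_nbhds_le:
  fixes A :: "'a::euclidean_space set" and \<alpha> \<beta> :: "'a \<Rightarrow> real"
  assumes [measurable]: "A \<in> sets borel" "\<alpha> \<in> borel_measurable borel" "\<beta> \<in> borel_measurable borel"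
    and "0 \<le> w1" "0 \<le> w2"
  shows "emeasure lborel {z. fst z \<in> A \<and> \<bar>snd z + \<alpha> (fst z)\<bar> \<le> w1 \<and> \<bar>snd z + \<beta> (fst z)\<bar> \<le> w2}
    \<le> ennreal (2 * min w1 w2) * emeasure lborel (A \<inter> {\<xi>. \<bar>\<alpha> \<xi> - \<beta> \<xi>\<bar> \<le> w1 + w2})"
    (is "emeasure lborel ?E \<le> _")
proof -
  have E_sets: "?E \<in> sets (lborel \<Otimes>\<^sub>M lborel)"
    using graph_nbhds_sets[of A \<alpha> \<beta> w1 w2] assms(1-3) by (simp only: lborel_prod)
  have fiber_le: "emeasure lborel (Pair \<xi> -` ?E)
      \<le> ennreal (2 * min w1 w2) * indicator (A \<inter> {\<xi>. \<bar>\<alpha> \<xi> - \<beta> \<xi>\<bar> \<le> w1 + w2}) \<xi>" for \<xi>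
  proof (cases "Pair \<xi> -` ?E = {}")
    case False
    then have \<xi>: "\<xi> \<in> A \<and> \<bar>\<alpha> \<xi> - \<beta> \<xi>\<bar> \<le> w1 + w2"
      by auto
    have interval_le: "emeasure lborel (Pair \<xi> -` ?E) \<le> ennreal (2 * w)"
      if "Pair \<xi> -` ?E \<subseteq> {c - w..c + w}" "0 \<le> w" for c w
      using emeasure_mono[OF that(1), of lborel] that(2) by simp
    have "emeasure lborel (Pair \<xi> -` ?E) \<le> ennreal (2 * w1)"
      by (rule interval_le[of "- \<alpha> \<xi>"]) (use assms(4) in \<open>auto simp: abs_le_iff\<close>)
    moreover have "emeasure lborel (Pair \<xi> -` ?E) \<le> ennreal (2 * w2)"
      by (rule interval_le[of "- \<beta> \<xi>"]) (use assms(5) in \<open>auto simp: abs_le_iff\<close>)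
    ultimately have "emeasure lborel (Pair \<xi> -` ?E) \<le> ennreal (2 * min w1 w2)"
      by (cases "w1 \<le> w2") (auto simp: min_def)
    with \<xi> show ?thesis
      by simp
  qed (metis emeasure_empty zero_le)
  have "emeasure lborel ?E = (\<integral>\<^sup>+\<xi>. emeasure lborel (Pair \<xi> -` ?E) \<partial>lborel)"
    using E_sets by (simp add: lborel_prod[symmetric] lborel.emeasure_pair_measure_alt)
  also have "\<dots> \<le> (\<integral>\<^sup>+\<xi>. ennreal (2 * min w1 w2) * indicator (A \<inter> {\<xi>. \<bar>\<alpha> \<xi> - \<beta> \<xi>\<bar> \<le> w1 + w2}) \<xi> \<partial>lborel)"
    by (intro nn_integral_mono fiber_le)
  also have "\<dots> = ennreal (2 * min w1 w2) * emeasure lborel (A \<inter> {\<xi>. \<bar>\<alpha> \<xi> - \<beta> \<xi>\<bar> \<le> w1 + w2})"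
    by (intro nn_integral_cmult_indicator) measurable
  finally show ?thesis .
qed

lemma nn_integral_lborel_shift:
  fixes h :: "'a::euclidean_space \<Rightarrow> ennreal"
  assumes [measurable]: "h \<in> borel_measurable borel"
  shows "(\<integral>\<^sup>+x. h (x - c) \<partial>lborel) = (\<integral>\<^sup>+x. h x \<partial>lborel)"
proof -
  have "(\<integral>\<^sup>+x. h x \<partial>lborel) = (\<integral>\<^sup>+x. h x \<partial>distr lborel borel ((+) (- c)))"
    by (simp add: lborel_distr_plus)
  also have "\<dots> = (\<integral>\<^sup>+x. h (- c + x) \<partial>lborel)"
    by (rule nn_integral_distr) auto
  finally show ?thesis
    by simp
qed

lemma nn_integral_lborel_reflect:
  fixes h :: "'a::euclidean_space \<Rightarrow> ennreal"
  assumes [measurable]: "h \<in> borel_measurable borel"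
  shows "(\<integral>\<^sup>+x. h (c - x) \<partial>lborel) = (\<integral>\<^sup>+x. h x \<partial>lborel)"
proof -
  have "(lborel :: 'a measure) = distr lborel borel (\<lambda>x. c + (-1) *\<^sub>R x)"
    using lborel_affine[of "-1" c] by (simp add: density_1)
  then have "(\<integral>\<^sup>+x. h x \<partial>lborel) = (\<integral>\<^sup>+x. h x \<partial>distr lborel borel (\<lambda>x. c + (-1) *\<^sub>R x))"
    by simp
  also have "\<dots> = (\<integral>\<^sup>+x. h (c + (-1) *\<^sub>R x) \<partial>lborel)"
    by (rule nn_integral_distr) auto
  finally show ?thesis
    by simp
qed

lemma nn_integral_pair_swap:
  fixes h :: "'a::euclidean_space \<times> 'a \<Rightarrow> ennreal"
  assumes "h \<in> borel_measurable (lborel \<Otimes>\<^sub>M lborel)"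
  shows "(\<integral>\<^sup>+z. h (snd z, fst z) \<partial>(lborel \<Otimes>\<^sub>M lborel)) = (\<integral>\<^sup>+z. h z \<partial>(lborel \<Otimes>\<^sub>M lborel))"
  using assms by (subst (2) lborel_pair.distr_pair_swap) (simp add: nn_integral_distr case_prod_beta)

lemma nn_integral_pair_diff:
  fixes h :: "'a::euclidean_space \<times> 'a \<Rightarrow> ennreal"
  assumes [measurable]: "h \<in> borel_measurable (lborel \<Otimes>\<^sub>M lborel)"
  shows "(\<integral>\<^sup>+z. h (fst z - snd z, fst z) \<partial>(lborel \<Otimes>\<^sub>M lborel)) = (\<integral>\<^sup>+z. h z \<partial>(lborel \<Otimes>\<^sub>M lborel))"
proof -
  have [measurable]: "h \<in> borel_measurable borel"
    using assms by (simp add: lborel_prod)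
  have "(\<integral>\<^sup>+z. h (fst z - snd z, fst z) \<partial>(lborel \<Otimes>\<^sub>M lborel))
      = (\<integral>\<^sup>+\<zeta>1. \<integral>\<^sup>+\<zeta>2. h (\<zeta>1 - \<zeta>2, \<zeta>1) \<partial>lborel \<partial>lborel)"
    by (subst lborel.nn_integral_fst[symmetric]) simp_all
  also have "\<dots> = (\<integral>\<^sup>+\<zeta>1. \<integral>\<^sup>+x. h (x, \<zeta>1) \<partial>lborel \<partial>lborel)"
    by (simp add: nn_integral_lborel_reflect[where h="\<lambda>x. h (x, _)"])
  also have "\<dots> = (\<integral>\<^sup>+z. h z \<partial>(lborel \<Otimes>\<^sub>M lborel))"
    by (simp add: lborel_pair.nn_integral_snd)
  finally show ?thesis .
qed

lemma nn_integral_pair_diff_mult: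
  fixes f g :: "'a::euclidean_space \<Rightarrow> ennreal"
  assumes [measurable]: "f \<in> borel_measurable borel" "g \<in> borel_measurable borel"
  shows "(\<integral>\<^sup>+z. f (fst z - snd z) * g (snd z) \<partial>(lborel \<Otimes>\<^sub>M lborel))
    = (\<integral>\<^sup>+x. f x \<partial>lborel) * (\<integral>\<^sup>+x. g x \<partial>lborel)"
proof -
  have "(\<integral>\<^sup>+z. f (fst z - snd z) * g (snd z) \<partial>(lborel \<Otimes>\<^sub>M lborel))
      = (\<integral>\<^sup>+\<zeta>2. (\<integral>\<^sup>+\<zeta>1. f (\<zeta>1 - \<zeta>2) \<partial>lborel) * g \<zeta>2 \<partial>lborel)"
    by (subst lborel_pair.nn_integral_snd[symmetric]) (simp_all add: nn_integral_multc)
  also have "\<dots> = (\<integral>\<^sup>+\<zeta>2. (\<integral>\<^sup>+x. f x \<partial>lborel) * g \<zeta>2 \<partial>lborel)"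
    by (simp add: nn_integral_lborel_shift)
  finally show ?thesis
    by (simp add: nn_integral_cmult)
qed

lemma nn_integral_fiber_indicator_le:
  fixes g :: "'a::euclidean_space \<Rightarrow> ennreal" and E :: "('a \<times> 'b::euclidean_space) set"
  assumes [measurable]: "g \<in> borel_measurable borel" "E \<in> sets (lborel \<Otimes>\<^sub>M lborel)"
    and fiber: "\<And>x. g x \<noteq> 0 \<Longrightarrow> emeasure lborel (Pair x -` E) \<le> K"
  shows "(\<integral>\<^sup>+z. g (fst z) * indicator E z \<partial>(lborel \<Otimes>\<^sub>M lborel)) \<le> K * (\<integral>\<^sup>+x. g x \<partial>lborel)"
proof -
  have "(\<integral>\<^sup>+y. g x * indicator (Pair x -` E) y \<partial>lborel) = g x * emeasure lborel (Pair x -` E)" for x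
    using sets_Pair1[OF assms(2)] by (intro nn_integral_cmult_indicator) simp
  then have "(\<integral>\<^sup>+z. g (fst z) * indicator E z \<partial>(lborel \<Otimes>\<^sub>M lborel))
      = (\<integral>\<^sup>+x. g x * emeasure lborel (Pair x -` E) \<partial>lborel)"
    by (subst lborel.nn_integral_fst[symmetric]) (simp_all add: indicator_def)
  also have "\<dots> \<le> (\<integral>\<^sup>+x. K * g x \<partial>lborel)"
  proof (intro nn_integral_mono)
    fix x
    show "g x * emeasure lborel (Pair x -` E) \<le> K * g x"
      using mult_left_mono[OF fiber[of x], of "g x"] by (cases "g x = 0") (simp_all add: mult.commute)
  qed
  finally show ?thesis
    by (simp add: nn_integral_cmult)
qed

definition sq_L2_norm :: "('a::euclidean_space \<Rightarrow> 'b::real_normed_vector) \<Rightarrow> ennreal" where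
  "sq_L2_norm F = (\<integral>\<^sup>+x. ennreal ((norm (F x))\<^sup>2) \<partial>lborel)"

definition trilinear_abs ::
    "('a::euclidean_space \<Rightarrow> 'b::real_normed_vector) \<Rightarrow> ('a \<Rightarrow> 'b) \<Rightarrow> ('a \<Rightarrow> 'b) \<Rightarrow> ennreal" where
  "trilinear_abs F G1 G2 = (\<integral>\<^sup>+z. ennreal (norm (F (fst z - snd z)) * norm (G1 (fst z)) * norm (G2 (snd z)))
     \<partial>(lborel \<Otimes>\<^sub>M lborel))"

lemma sq_L2_norm_reflect:
  assumes "F \<in> borel_measurable borel"
  shows "sq_L2_norm (\<lambda>x. F (- x)) = sq_L2_norm F"
  using nn_integral_lborel_reflect[of "\<lambda>x. ennreal ((norm (F x))\<^sup>2)" 0] assms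
  by (simp add: sq_L2_norm_def)

text \<open>The substitutions \<open>(\<zeta>1, \<zeta>2) \<mapsto> (\<zeta>2, \<zeta>1)\<close> and \<open>(\<zeta>1, \<zeta>2) \<mapsto> (\<zeta>1 - \<zeta>2, \<zeta>1)\<close> permute the roles
  of the three functions, so that \<open>trilinear_abs_sq_le\<close> can take its fibres over any variable.\<close>

lemma trilinear_abs_swap:
  assumes [measurable]: "F \<in> borel_measurable borel" "G1 \<in> borel_measurable borel" "G2 \<in> borel_measurable borel"
  shows "trilinear_abs F G1 G2 = trilinear_abs (\<lambda>x. F (- x)) G2 G1"
  unfolding trilinear_abs_def
  by (subst nn_integral_pair_swap[symmetric]) (simp_all add: mult_ac)

lemma trilinear_abs_rotate:
  assumes [measurable]: "F \<in> borel_measurable borel" "G1 \<in> borel_measurable borel" "G2 \<in> borel_measurable borel"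
  shows "trilinear_abs F G1 G2 = trilinear_abs (\<lambda>x. G2 (- x)) F G1"
  unfolding trilinear_abs_def
  by (subst nn_integral_pair_diff[symmetric]) (simp_all add: mult_ac)

lemma trilinear_abs_nonzero:
  assumes "trilinear_abs F G1 G2 \<noteq> 0"
  obtains \<zeta>1 \<zeta>2 where "F (\<zeta>1 - \<zeta>2) \<noteq> 0" "G1 \<zeta>1 \<noteq> 0" "G2 \<zeta>2 \<noteq> 0"
proof -
  have "\<exists>z. F (fst z - snd z) \<noteq> 0 \<and> G1 (fst z) \<noteq> 0 \<and> G2 (snd z) \<noteq> 0"
  proof (rule ccontr)
    assume "\<not> ?thesis"
    then have "(\<lambda>z. ennreal (norm (F (fst z - snd z)) * norm (G1 (fst z)) * norm (G2 (snd z)))) = (\<lambda>z. 0)"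
      by (auto simp: fun_eq_iff)
    then show False
      using assms by (simp add: trilinear_abs_def)
  qed
  then show ?thesis
    using that by blast
qed

lemma norm_integral_le_trilinear_abs:
  fixes F G1 G2 :: "'a::euclidean_space \<Rightarrow> 'b::{real_normed_field, banach, second_countable_topology}"
  shows "ennreal (norm (\<integral>z. F (fst z - snd z) * G1 (fst z) * G2 (snd z) \<partial>(lborel \<Otimes>\<^sub>M lborel)))
    \<le> trilinear_abs F G1 G2"
proof (cases "integrable (lborel \<Otimes>\<^sub>M lborel) (\<lambda>z. F (fst z - snd z) * G1 (fst z) * G2 (snd z))")
  case True
  then show ?thesis
    unfolding trilinear_abs_def using integral_norm_bound_ennreal[OF True] by (simp add: norm_mult)
qed (simp add: not_integrable_integral_eq)

lemma trilinear_abs_sq_le: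
  fixes F G1 G2 :: "'a::euclidean_space \<Rightarrow> 'b::real_normed_vector"
  assumes [measurable]: "F \<in> borel_measurable borel" "G1 \<in> borel_measurable borel" "G2 \<in> borel_measurable borel"
    and fiber: "\<And>\<zeta>1. G1 \<zeta>1 \<noteq> 0 \<Longrightarrow> emeasure lborel {\<zeta>2. F (\<zeta>1 - \<zeta>2) \<noteq> 0 \<and> G2 \<zeta>2 \<noteq> 0} \<le> K"
  shows "(trilinear_abs F G1 G2)\<^sup>2 \<le> K * sq_L2_norm F * sq_L2_norm G1 * sq_L2_norm G2"
proof -
  define E where "E = {z. F (fst z - snd z) \<noteq> 0 \<and> G2 (snd z) \<noteq> 0}"
  define a where "a z = ennreal (norm (F (fst z - snd z)) * norm (G2 (snd z)))" for z
  define b where "b z = ennreal (norm (G1 (fst z))) * indicator E z" for z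
  have E_sets [measurable]: "E \<in> sets (lborel \<Otimes>\<^sub>M lborel)"
  proof -
    have "{z \<in> space (lborel \<Otimes>\<^sub>M lborel). F (fst z - snd z) \<noteq> 0 \<and> G2 (snd z) \<noteq> 0} \<in> sets (lborel \<Otimes>\<^sub>M lborel)"
      by measurable
    then show ?thesis
      by (simp add: E_def space_pair_measure)
  qed
  have [measurable]: "a \<in> borel_measurable (lborel \<Otimes>\<^sub>M lborel)" "b \<in> borel_measurable (lborel \<Otimes>\<^sub>M lborel)"
    unfolding a_def b_def by measurable
  have ab: "trilinear_abs F G1 G2 = (\<integral>\<^sup>+z. a z * b z \<partial>(lborel \<Otimes>\<^sub>M lborel))"
    unfolding trilinear_abs_def
    by (intro nn_integral_cong) (auto simp: a_def b_def E_def ennreal_mult'[symmetric] split: split_indicator)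
  have a_sq: "(\<integral>\<^sup>+z. a z ^ 2 \<partial>(lborel \<Otimes>\<^sub>M lborel)) = sq_L2_norm F * sq_L2_norm G2"
    using nn_integral_pair_diff_mult[of "\<lambda>x. ennreal ((norm (F x))\<^sup>2)" "\<lambda>x. ennreal ((norm (G2 x))\<^sup>2)"]
    by (simp add: a_def sq_L2_norm_def ennreal_power[symmetric] ennreal_mult power_mult_distrib)
  have b_sq: "(\<integral>\<^sup>+z. b z ^ 2 \<partial>(lborel \<Otimes>\<^sub>M lborel)) \<le> K * sq_L2_norm G1"
  proof -
    have "b z ^ 2 = ennreal ((norm (G1 (fst z)))\<^sup>2) * indicator E z" for z
      by (simp add: b_def ennreal_power power_mult_distrib split: split_indicator)
    moreover have "emeasure lborel (Pair \<zeta>1 -` E) \<le> K" if "ennreal ((norm (G1 \<zeta>1))\<^sup>2) \<noteq> 0" for \<zeta>1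
      using fiber that by (simp add: E_def)
    ultimately show ?thesis
      using nn_integral_fiber_indicator_le[OF _ E_sets, of "\<lambda>x. ennreal ((norm (G1 x))\<^sup>2)" K]
      by (simp add: sq_L2_norm_def)
  qed
  have "(trilinear_abs F G1 G2)\<^sup>2 \<le> (sq_L2_norm F * sq_L2_norm G2) * (\<integral>\<^sup>+z. b z ^ 2 \<partial>(lborel \<Otimes>\<^sub>M lborel))"
    using Cauchy_Schwarz_nn_integral[of a "lborel \<Otimes>\<^sub>M lborel" b] by (simp add: ab a_sq)
  also have "\<dots> \<le> (sq_L2_norm F * sq_L2_norm G2) * (K * sq_L2_norm G1)"
    using b_sq by (rule mult_left_mono) simp
  finally show ?thesis
    by (simp add: mult_ac)
qed

section \<open>Frequency and modulation regions\<close>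

lemma dyadic_ge_1: "dyadic N \<Longrightarrow> 1 \<le> N"
  by (auto simp: dyadic_def)

lemma dyadic_cases:
  assumes "dyadic N"
  shows "N = 1 \<or> 2 \<le> N"
proof -
  obtain n :: nat where "N = 2 ^ n"
    using assms by (auto simp: dyadic_def)
  then show ?thesis
    by (cases n) auto
qed

text \<open>Relaxations of \<open>Pset N \<inter> Wset s L\<close> and \<open>Pset N \<inter> Sset L\<close> without the case
  distinctions at \<open>N = 1\<close> and \<open>L = 1\<close>.\<close>

definition wave_region :: "real \<Rightarrow> real \<Rightarrow> real \<Rightarrow> pt set" where
  "wave_region N s L = {z. fst z \<in> annulus N \<and> \<bar>snd z + s * norm (fst z)\<bar> \<le> 2 * L}"

definition schr_region :: "real \<Rightarrow> real \<Rightarrow> pt set" where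
  "schr_region N L = {z. fst z \<in> annulus N \<and> \<bar>snd z + (norm (fst z))\<^sup>2\<bar> \<le> 2 * L}"

lemma wave_region_sets [measurable]: "wave_region N s L \<in> sets borel"
proof -
  have "wave_region N s L = {z \<in> space (lborel \<Otimes>\<^sub>M lborel). fst z \<in> annulus N \<and> \<bar>snd z + s * norm (fst z)\<bar> \<le> 2 * L}"
    by (auto simp: wave_region_def space_pair_measure)
  also have "\<dots> \<in> sets (lborel \<Otimes>\<^sub>M lborel)"
    by measurable
  finally show ?thesis
    by (simp only: lborel_prod sets_lborel)
qed

lemma schr_region_sets [measurable]: "schr_region N L \<in> sets borel"
proof -
  have "schr_region N L = {z \<in> space (lborel \<Otimes>\<^sub>M lborel). fst z \<in> annulus N \<and> \<bar>snd z + (norm (fst z))\<^sup>2\<bar> \<le> 2 * L}"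
    by (auto simp: schr_region_def space_pair_measure)
  also have "\<dots> \<in> sets (lborel \<Otimes>\<^sub>M lborel)"
    by measurable
  finally show ?thesis
    by (simp only: lborel_prod sets_lborel)
qed

lemma Pset_Wset_subset: "dyadic N \<Longrightarrow> dyadic L \<Longrightarrow> Pset N \<inter> Wset s L \<subseteq> wave_region N s L"
  using dyadic_cases[of N] dyadic_cases[of L]
  by (auto simp: Pset_def Wset_def wave_region_def annulus_def)

lemma Pset_Sset_subset: "dyadic N \<Longrightarrow> dyadic L \<Longrightarrow> Pset N \<inter> Sset L \<subseteq> schr_region N L"
  using dyadic_cases[of N] dyadic_cases[of L]
  by (auto simp: Pset_def Sset_def schr_region_def annulus_def)

lemma uminus_in_wave_region: "- z \<in> wave_region N s L \<longleftrightarrow> z \<in> wave_region N (- s) L"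
  by (auto simp: wave_region_def annulus_def abs_minus_commute)

lemma uminus_in_Pset_Wset: "- z \<in> Pset N \<inter> Wset s L \<longleftrightarrow> z \<in> Pset N \<inter> Wset (- s) L"
proof -
  have "\<bar>- snd z + s * norm (fst z)\<bar> = \<bar>snd z + - s * norm (fst z)\<bar>"
    by (simp add: abs_minus_commute)
  then show ?thesis
    by (simp add: Pset_def Wset_def)
qed

lemma unitL2_suppD:
  assumes "unitL2_supp f A"
  shows "f \<in> borel_measurable borel" "sq_L2_norm f = 1" "f z \<noteq> 0 \<Longrightarrow> z \<in> A"
proof -
  show "f \<in> borel_measurable borel" "sq_L2_norm f = 1"
    using assms by (simp_all add: unitL2_supp_def sq_L2_norm_def)
  show "f z \<noteq> 0 \<Longrightarrow> z \<in> A"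
    using assms unfolding unitL2_supp_def by blast
qed

lemma unitL2_supp_mono: "unitL2_supp f A \<Longrightarrow> A \<subseteq> B \<Longrightarrow> unitL2_supp f B"
  by (auto simp: unitL2_supp_def)

lemma unitL2_supp_reflect:
  assumes "unitL2_supp f A" "\<And>z. - z \<in> A \<Longrightarrow> z \<in> B"
  shows "unitL2_supp (\<lambda>z. f (- z)) B"
  using unitL2_suppD[OF assms(1)] sq_L2_norm_reflect[of f] assms(2)
  by (auto simp: unitL2_supp_def sq_L2_norm_def)

lemma emeasure_paraboloid_nbhd_le:
  fixes \<beta> :: "real^2 \<Rightarrow> real"
  assumes [measurable]: "\<beta> \<in> borel_measurable borel" and "0 \<le> La" "0 \<le> Lb"
    and sub: "S \<subseteq> {z. fst z \<in> annulus N \<and> \<bar>snd z + (norm (fst z))\<^sup>2\<bar> \<le> 2 * La \<and> \<bar>snd z + \<beta> (fst z)\<bar> \<le> 2 * Lb}"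
    and area: "emeasure lborel (annulus N \<inter> {\<eta>. \<bar>(norm \<eta>)\<^sup>2 - \<beta> \<eta>\<bar> \<le> 2 * (La + Lb)}) \<le> ennreal \<Lambda>"
  shows "emeasure lborel S \<le> ennreal (4 * min La Lb * \<Lambda>)"
proof -
  have "emeasure lborel S \<le> emeasure lborel
      {z. fst z \<in> annulus N \<and> \<bar>snd z + (norm (fst z))\<^sup>2\<bar> \<le> 2 * La \<and> \<bar>snd z + \<beta> (fst z)\<bar> \<le> 2 * Lb}"
    using sub graph_nbhds_sets[of "annulus N" "\<lambda>\<eta>. (norm \<eta>)\<^sup>2" \<beta>] by (intro emeasure_mono) simp_all
  also have "\<dots> \<le> ennreal (2 * min (2 * La) (2 * Lb))
      * emeasure lborel (annulus N \<inter> {\<eta>. \<bar>(norm \<eta>)\<^sup>2 - \<beta> \<eta>\<bar> \<le> 2 * La + 2 * Lb})"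
    using assms by (intro emeasure_graph_nbhds_le) simp_all
  also have "\<dots> \<le> ennreal (2 * min (2 * La) (2 * Lb)) * ennreal \<Lambda>"
    using area by (intro mult_left_mono) (simp_all add: algebra_simps)
  also have "\<dots> = ennreal (4 * min La Lb * \<Lambda>)"
    using assms by (simp add: ennreal_mult'[symmetric] min_def)
  finally show ?thesis .
qed

lemma annulus_subset_cball: "annulus N \<subseteq> cball 0 (2 * N)"
  by (auto simp: annulus_def)

lemma le_ennreal_min: "x \<le> ennreal a \<Longrightarrow> x \<le> ennreal b \<Longrightarrow> x \<le> ennreal (min a b)"
  by (simp add: min_def)

lemma emeasure_annulus_inter_le_cball:
  assumes "B \<in> sets borel" "0 \<le> N"
  shows "emeasure lborel (annulus N \<inter> B) \<le> ennreal (32 * N\<^sup>2)"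
  using emeasure_plane_le_cball[of "annulus N \<inter> B" 0 "2 * N"] annulus_subset_cball assms
  by (auto simp: power_mult_distrib)

lemma emeasure_schr_wave_fiber:
  assumes "1 \<le> N'" "1 \<le> L'" "1 \<le> L" "\<bar>s\<bar> \<le> 1"
  shows "emeasure lborel {\<zeta>'. \<zeta>' \<in> schr_region N' L' \<and> \<zeta> - \<zeta>' \<in> wave_region N s L}
    \<le> ennreal (4 * min L' L * min (32 * N'\<^sup>2) (4096 * (L' + L)))"
proof -
  obtain \<xi> \<tau> where \<zeta>: "\<zeta> = (\<xi>, \<tau>)"
    by fastforce
  define \<beta> where "\<beta> \<eta> = - \<tau> - s * norm (\<xi> - \<eta>)" for \<eta>
  have [measurable]: "\<beta> \<in> borel_measurable borel"
    unfolding \<beta>_def by measurable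
  have "{\<eta>. \<bar>(norm \<eta>)\<^sup>2 - \<beta> \<eta>\<bar> \<le> 2 * (L' + L)} = {\<eta>. \<bar>(norm \<eta>)\<^sup>2 + s * norm (\<eta> - \<xi>) - (- \<tau>)\<bar> \<le> 2 * (L' + L)}"
    by (simp add: \<beta>_def norm_minus_commute algebra_simps)
  then have "emeasure lborel (annulus N' \<inter> {\<eta>. \<bar>(norm \<eta>)\<^sup>2 - \<beta> \<eta>\<bar> \<le> 2 * (L' + L)}) \<le> ennreal (4096 * (L' + L))"
    using emeasure_annulus_level_set[of s N' "2 * (L' + L)" \<xi> "- \<tau>"] assms by simp
  then have "emeasure lborel (annulus N' \<inter> {\<eta>. \<bar>(norm \<eta>)\<^sup>2 - \<beta> \<eta>\<bar> \<le> 2 * (L' + L)})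
      \<le> ennreal (min (32 * N'\<^sup>2) (4096 * (L' + L)))"
    using assms by (intro le_ennreal_min emeasure_annulus_inter_le_cball) (simp_all add: \<beta>_def)
  then show ?thesis
    using assms by (intro emeasure_paraboloid_nbhd_le[where \<beta>=\<beta>])
      (auto simp: \<zeta> \<beta>_def schr_region_def wave_region_def abs_minus_commute algebra_simps)
qed

lemma emeasure_schr_schr_fiber:
  assumes "1 \<le> N1" "64 * N1 \<le> N2" "1 \<le> L1" "1 \<le> L2"
  shows "emeasure lborel {\<zeta>1. \<zeta>1 \<in> schr_region N1 L1 \<and> \<zeta>1 - \<zeta> \<in> schr_region N2 L2}
    \<le> ennreal (4 * min L1 L2 * min (32 * N1\<^sup>2) (128 * N1 * (L1 + L2) / N2))"
    (is "emeasure lborel ?S \<le> _")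
proof (cases "?S = {}")
  case False
  obtain \<xi> \<tau> where \<zeta>: "\<zeta> = (\<xi>, \<tau>)"
    by fastforce
  obtain \<eta>0 \<sigma>0 where "(\<eta>0, \<sigma>0) \<in> ?S"
    using False by auto
  then have "norm \<eta>0 \<le> 2 * N1" "N2 / 2 \<le> norm (\<eta>0 - \<xi>)"
    using assms by (auto simp: \<zeta> schr_region_def annulus_def)
  then have large: "N2 / 2 \<le> norm (2 *\<^sub>R \<xi>)"
    using norm_triangle_ineq4[of \<eta>0 \<xi>] assms by simp
  define \<beta> where "\<beta> \<eta> = - \<tau> + (norm (\<eta> - \<xi>))\<^sup>2" for \<eta>
  define A where "A = annulus N1 \<inter> {\<eta>. \<bar>(norm \<eta>)\<^sup>2 - \<beta> \<eta>\<bar> \<le> 2 * (L1 + L2)}"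
  have [measurable]: "\<beta> \<in> borel_measurable borel"
    unfolding \<beta>_def by measurable
  then have A_sets: "A \<in> sets borel"
    unfolding A_def by measurable
  have "\<bar>(\<tau> - (norm \<xi>)\<^sup>2) + (2 *\<^sub>R \<xi>) \<bullet> \<eta>\<bar> \<le> 2 * (L1 + L2)" if "\<eta> \<in> A" for \<eta>
    using that by (simp add: A_def \<beta>_def power2_norm_eq_inner inner_diff_left inner_diff_right
      inner_commute algebra_simps)
  then have "emeasure lborel A \<le> ennreal (16 * (2 * N1) * (2 * (L1 + L2)) / (N2 / 2))"
    using annulus_subset_cball assms large
    by (intro emeasure_plane_le_strip[OF A_sets, where q=0 and c="\<tau> - (norm \<xi>)\<^sup>2" and \<xi>="2 *\<^sub>R \<xi>"])
      (auto simp: A_def)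
  moreover have "emeasure lborel A \<le> ennreal (32 * N1\<^sup>2)"
    unfolding A_def using assms by (intro emeasure_annulus_inter_le_cball) simp_all
  ultimately have "emeasure lborel A \<le> ennreal (min (32 * N1\<^sup>2) (128 * N1 * (L1 + L2) / N2))"
    by (intro le_ennreal_min) (simp_all add: field_simps)
  then show ?thesis
    using assms unfolding A_def
    by (intro emeasure_paraboloid_nbhd_le[where \<beta>=\<beta>]) (auto simp: \<zeta> \<beta>_def schr_region_def)
qed (metis emeasure_empty zero_le)

lemma low_high_resonance:
  assumes z1: "\<zeta>1 \<in> schr_region N1 L1" and z2: "\<zeta>2 \<in> schr_region N2 L2"
    and z: "\<zeta>1 - \<zeta>2 \<in> wave_region N s L"
    and "\<bar>s\<bar> \<le> 1" "1 \<le> N1" "64 * N1 \<le> N2"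
  shows "N2\<^sup>2 \<le> 48 * max L1 (max L2 L)" and "N \<le> 6 * N2"
proof -
  obtain \<xi>1 \<tau>1 \<xi>2 \<tau>2 where \<zeta>: "\<zeta>1 = (\<xi>1, \<tau>1)" "\<zeta>2 = (\<xi>2, \<tau>2)"
    by fastforce
  define d where "d = norm (\<xi>1 - \<xi>2)"
  have a: "norm \<xi>1 \<le> 2 * N1" and b: "N2 / 2 \<le> norm \<xi>2" "norm \<xi>2 \<le> 2 * N2"
    using z1 z2 assms by (auto simp: \<zeta> schr_region_def annulus_def)
  have d: "d \<le> 3 * N2"
    using norm_triangle_ineq4[of \<xi>1 \<xi>2] a b assms by (simp add: d_def)
  have "\<bar>\<tau>1 + (norm \<xi>1)\<^sup>2\<bar> \<le> 2 * L1" "\<bar>\<tau>2 + (norm \<xi>2)\<^sup>2\<bar> \<le> 2 * L2" "\<bar>\<tau>1 - \<tau>2 + s * d\<bar> \<le> 2 * L"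
    using z1 z2 z by (auto simp: \<zeta> d_def schr_region_def wave_region_def)
  then have upper: "(norm \<xi>2)\<^sup>2 - (norm \<xi>1)\<^sup>2 + s * d \<le> 6 * max L1 (max L2 L)"
    by (simp add: abs_le_iff max_def split: if_splits)
  have "(norm \<xi>1)\<^sup>2 \<le> (2 * N1)\<^sup>2" "(N2 / 2)\<^sup>2 \<le> (norm \<xi>2)\<^sup>2" "(64 * N1)\<^sup>2 \<le> N2\<^sup>2"
    using a b assms by (intro power_mono; simp)+
  moreover have "\<bar>s * d\<bar> \<le> 3 * N2"
    using d \<open>\<bar>s\<bar> \<le> 1\<close> mult_mono[of "\<bar>s\<bar>" 1 d "3 * N2"] by (simp add: d_def abs_mult)
  moreover have "64 * N2 \<le> N2\<^sup>2"
    using assms by (simp add: power2_eq_square)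
  ultimately have "N2\<^sup>2 / 8 \<le> (norm \<xi>2)\<^sup>2 - (norm \<xi>1)\<^sup>2 + s * d"
    by (simp add: power_mult_distrib power_divide abs_le_iff)
  with upper show "N2\<^sup>2 \<le> 48 * max L1 (max L2 L)"
    by simp
  have "2 \<le> N \<Longrightarrow> N / 2 \<le> d"
    using z by (simp add: \<zeta> d_def wave_region_def annulus_def)
  then show "N \<le> 6 * N2"
    using d assms by (cases "2 \<le> N") auto
qed

section \<open>Bookkeeping of exponents\<close>

lemma power_bound_core:
  fixes X c u v w n M :: real
  assumes "0 \<le> X" "X \<le> c * u * min v (n\<^sup>2)" "0 \<le> u" "u \<le> v" "M\<^sup>2 \<le> 48 * w" "0 \<le> n" "n \<le> M"
  shows "X ^ 6 * M ^ 8 \<le> c ^ 6 * 48 ^ 5 * (u * v * w) ^ 5 * n\<^sup>2"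
proof -
  define \<mu> where "\<mu> = min v (n\<^sup>2)"
  have \<mu>: "0 \<le> \<mu>" "\<mu> \<le> v" "\<mu> \<le> n\<^sup>2"
    using assms by (auto simp: \<mu>_def)
  have "n\<^sup>2 \<le> M\<^sup>2"
    using assms by (intro power_mono) auto
  then have w: "0 \<le> w" "n\<^sup>2 \<le> 48 * w"
    using assms(5) zero_le_power2[of n] by linarith+
  have "u * \<mu> ^ 6 = u * \<mu> ^ 4 * \<mu>\<^sup>2"
    by algebra
  also have "\<dots> \<le> v * v ^ 4 * (n\<^sup>2)\<^sup>2"
    using assms \<mu> power_mono[OF \<mu>(3) \<mu>(1), of 2] by (intro mult_mono power_mono) auto
  also have "\<dots> = v ^ 5 * n\<^sup>2 * n\<^sup>2"
    by algebra
  also have "\<dots> \<le> v ^ 5 * n\<^sup>2 * (48 * w)"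
    using assms w by (intro mult_left_mono) auto
  finally have key: "u * \<mu> ^ 6 \<le> 48 * w * v ^ 5 * n\<^sup>2"
    by (simp add: mult_ac)
  have "X ^ 6 \<le> (c * u * \<mu>) ^ 6"
    using assms by (intro power_mono) (auto simp: \<mu>_def)
  moreover have "M ^ 8 \<le> (48 * w) ^ 4"
    using power_mono[OF assms(5) zero_le_power2, of 4] by (simp flip: power_mult)
  ultimately have "X ^ 6 * M ^ 8 \<le> (c * u * \<mu>) ^ 6 * (48 * w) ^ 4"
    using assms by (intro mult_mono) auto
  also have "\<dots> = c ^ 6 * u ^ 5 * (48 * w) ^ 4 * (u * \<mu> ^ 6)"
    by algebra
  also have "\<dots> \<le> c ^ 6 * u ^ 5 * (48 * w) ^ 4 * (48 * w * v ^ 5 * n\<^sup>2)"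
    using key assms w by (intro mult_left_mono) auto
  also have "\<dots> = c ^ 6 * 48 ^ 5 * (u * v * w) ^ 5 * n\<^sup>2"
    by algebra
  finally show ?thesis .
qed

lemma power_bound_dominant_wave:
  fixes X c p q l n M :: real
  assumes "0 \<le> X" "X * M \<le> c * (p * q * n)" "0 \<le> p" "0 \<le> q" "p \<le> l" "q \<le> l"
    and "M\<^sup>2 \<le> 48 * l" "0 \<le> n" "n \<le> M"
  shows "X ^ 6 * M ^ 8 \<le> c ^ 6 * 48 ^ 3 * (p * q * l) ^ 5 * n\<^sup>2"
proof -
  have pq: "p * q \<le> l\<^sup>2"
    using assms by (simp add: power2_eq_square mult_mono)
  have n4: "n ^ 4 \<le> M ^ 4"
    using assms by (intro power_mono) auto
  have M6: "M ^ 6 \<le> (48 * l) ^ 3"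
    using power_mono[OF assms(7) zero_le_power2, of 3] by (simp flip: power_mult)
  have "X ^ 6 * M ^ 8 = (X * M) ^ 6 * M\<^sup>2"
    by algebra
  also have "\<dots> \<le> (c * (p * q * n)) ^ 6 * M\<^sup>2"
    using assms by (intro mult_right_mono power_mono) auto
  also have "\<dots> = c ^ 6 * (p * q) ^ 5 * (p * q) * n\<^sup>2 * (n ^ 4 * M\<^sup>2)"
    by algebra
  also have "\<dots> \<le> c ^ 6 * (p * q) ^ 5 * l\<^sup>2 * n\<^sup>2 * (M ^ 4 * M\<^sup>2)"
    using assms pq n4 by (intro mult_mono mult_left_mono) (auto simp: zero_le_mult_iff)
  also have "\<dots> = c ^ 6 * (p * q) ^ 5 * l\<^sup>2 * n\<^sup>2 * M ^ 6"
    by algebra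
  also have "\<dots> \<le> c ^ 6 * (p * q) ^ 5 * l\<^sup>2 * n\<^sup>2 * (48 * l) ^ 3"
    using assms M6 by (intro mult_left_mono) (auto simp: zero_le_mult_iff)
  also have "\<dots> = c ^ 6 * 48 ^ 3 * (p * q * l) ^ 5 * n\<^sup>2"
    by algebra
  finally show ?thesis .
qed

lemma min_times_sum_le: "0 \<le> a \<Longrightarrow> 0 \<le> (b::real) \<Longrightarrow> min a b * (a + b) \<le> 2 * a * b"
  by (cases "a \<le> b") (auto simp: min_def algebra_simps intro: mult_right_mono mult_left_mono)

lemma le_mult_min: "X \<le> c * a \<Longrightarrow> X \<le> c * b \<Longrightarrow> X \<le> c * min a (b::real)"
  by (simp add: min_def)

lemma le_mult_minD:
  fixes X a b c :: real
  assumes "X \<le> a * min b c" "0 \<le> a"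
  shows "X \<le> a * b" "X \<le> a * c"
  using assms mult_left_mono[OF min.cobounded1[of b c] \<open>0 \<le> a\<close>]
    mult_left_mono[OF min.cobounded2[of b c] \<open>0 \<le> a\<close>] by linarith+

lemma power_bound_wave_max:
  fixes X N1 N2 L1 L2 L :: real
  assumes bounds: "0 \<le> X" "1 \<le> N1" "N1 \<le> N2" "1 \<le> L1" "1 \<le> L2" "L1 \<le> L" "L2 \<le> L"
    and res: "N2\<^sup>2 \<le> 48 * L"
    and X: "X \<le> 4 * min L1 L2 * min (32 * N1\<^sup>2) (128 * N1 * (L1 + L2) / N2)"
  shows "X ^ 6 * N2 ^ 8 \<le> 32768 ^ 6 * 48 ^ 5 * (L1 * L2 * L) ^ 5 * N1\<^sup>2"
proof -
  have N2: "0 < N2"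
    using bounds by linarith
  have "X \<le> 4 * min L1 L2 * (128 * N1 * (L1 + L2) / N2)"
    using le_mult_minD(2)[OF X] bounds by simp
  also have "\<dots> = 512 * N1 * (min L1 L2 * (L1 + L2)) / N2"
    by simp
  also have "\<dots> \<le> 512 * N1 * (2 * L1 * L2) / N2"
    using bounds N2 min_times_sum_le[of L1 L2] by (intro divide_right_mono mult_left_mono) auto
  finally have "X * N2 \<le> 1024 * (L1 * L2 * N1)"
    using N2 by (simp add: field_simps)
  then have "X ^ 6 * N2 ^ 8 \<le> 1024 ^ 6 * 48 ^ 3 * (L1 * L2 * L) ^ 5 * N1\<^sup>2"
    using bounds res by (intro power_bound_dominant_wave) simp_all
  also have "\<dots> \<le> 32768 ^ 6 * 48 ^ 5 * (L1 * L2 * L) ^ 5 * N1\<^sup>2"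
    using bounds mult_right_mono[of "1024 ^ 6 * 48 ^ 3" "32768 ^ 6 * 48 ^ 5" "(L1 * L2 * L) ^ 5 * N1\<^sup>2"]
    by (simp add: mult.assoc)
  finally show ?thesis .
qed

lemma power_bound_high_max:
  fixes X N1 N2 L1 L2 L :: real
  assumes bounds: "0 \<le> X" "1 \<le> N1" "N1 \<le> N2" "1 \<le> L1" "1 \<le> L" "L1 \<le> L2" "L \<le> L2"
    and res: "N2\<^sup>2 \<le> 48 * L2"
    and X: "X \<le> 4 * min L1 L * min (32 * N1\<^sup>2) (4096 * (L1 + L))"
  shows "X ^ 6 * N2 ^ 8 \<le> 32768 ^ 6 * 48 ^ 5 * (L1 * L2 * L) ^ 5 * N1\<^sup>2"
proof -
  have "X \<le> 4 * min L1 L * (32 * N1\<^sup>2)" "X \<le> 4 * min L1 L * (4096 * (L1 + L))"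
    using le_mult_minD[OF X] bounds by simp_all
  moreover have "0 \<le> min L1 L * N1\<^sup>2" "4 * min L1 L * (4096 * (L1 + L)) \<le> 32768 * min L1 L * max L1 L"
    using bounds by (auto simp: min_def max_def)
  ultimately have "X \<le> 32768 * min L1 L * min (max L1 L) (N1\<^sup>2)"
    by (intro le_mult_min) linarith+
  then have "X ^ 6 * N2 ^ 8 \<le> 32768 ^ 6 * 48 ^ 5 * (min L1 L * max L1 L * L2) ^ 5 * N1\<^sup>2"
    using bounds res by (intro power_bound_core) (simp_all add: min_le_iff_disj)
  moreover have "min L1 L * max L1 L * L2 = L1 * L2 * L"
    by (cases "L1 \<le> L") (simp_all add: min_def max_def)
  ultimately show ?thesis
    by simp
qed

lemma power_bound_low_max:
  fixes X N1 N2 L1 L2 L :: real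
  assumes bounds: "0 \<le> X" "1 \<le> N1" "N1 \<le> N2" "1 \<le> L2" "1 \<le> L" "L2 \<le> L1" "L \<le> L1"
    and res: "N2\<^sup>2 \<le> 48 * L1"
    and Xa: "X \<le> 4 * min L1 L2 * min (32 * N1\<^sup>2) (128 * N1 * (L1 + L2) / N2)"
    and Xb: "X \<le> 4 * min L2 L * min (32 * N2\<^sup>2) (4096 * (L2 + L))"
    and Xc: "X \<le> 4 * min L1 L * min (32 * N1\<^sup>2) (4096 * (L1 + L))"
  shows "X ^ 6 * N2 ^ 8 \<le> 32768 ^ 6 * 48 ^ 5 * (L1 * L2 * L) ^ 5 * N1\<^sup>2"
proof -
  have "X \<le> 4 * min L2 L * (4096 * (L2 + L))"
    using le_mult_minD(2)[OF Xb] bounds by simp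
  also have "\<dots> \<le> 32768 * min L2 L * max L2 L"
    using bounds by (auto simp: min_def max_def)
  finally have X1: "X \<le> 32768 * min L2 L * max L2 L" .
  have "X \<le> 4 * min L1 L2 * (32 * N1\<^sup>2)" "X \<le> 4 * min L1 L * (32 * N1\<^sup>2)"
    using le_mult_minD(1)[OF Xa] le_mult_minD(1)[OF Xc] bounds by simp_all
  then have "X \<le> 128 * (min L2 L * N1\<^sup>2)"
    using bounds by (auto simp: min_def split: if_splits)
  moreover have "0 \<le> min L2 L * N1\<^sup>2"
    using bounds by simp
  ultimately have "X \<le> 32768 * min L2 L * N1\<^sup>2"
    by linarith
  with X1 have "X \<le> 32768 * min L2 L * min (max L2 L) (N1\<^sup>2)"
    by (rule le_mult_min)
  then have "X ^ 6 * N2 ^ 8 \<le> 32768 ^ 6 * 48 ^ 5 * (min L2 L * max L2 L * L1) ^ 5 * N1\<^sup>2"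
    using bounds res by (intro power_bound_core) (simp_all add: min_le_iff_disj)
  moreover have "min L2 L * max L2 L * L1 = L1 * L2 * L"
    by (cases "L2 \<le> L") (simp_all add: min_def max_def)
  ultimately show ?thesis
    by simp
qed

lemma power_bound_three_modulations:
  fixes X N1 N2 L1 L2 L :: real
  assumes bounds: "0 \<le> X" "1 \<le> N1" "N1 \<le> N2" "1 \<le> L1" "1 \<le> L2" "1 \<le> L"
    and res: "N2\<^sup>2 \<le> 48 * max L1 (max L2 L)"
    and Xa: "X \<le> 4 * min L1 L2 * min (32 * N1\<^sup>2) (128 * N1 * (L1 + L2) / N2)"
    and Xb: "X \<le> 4 * min L2 L * min (32 * N2\<^sup>2) (4096 * (L2 + L))"
    and Xc: "X \<le> 4 * min L1 L * min (32 * N1\<^sup>2) (4096 * (L1 + L))"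
  shows "X ^ 6 * N2 ^ 8 \<le> 32768 ^ 6 * 48 ^ 5 * (L1 * L2 * L) ^ 5 * N1\<^sup>2"
proof -
  consider "L1 \<le> L" "L2 \<le> L" | "L1 \<le> L2" "L \<le> L2" | "L2 \<le> L1" "L \<le> L1"
    by linarith
  then show ?thesis
  proof cases
    case 1
    then show ?thesis
      using bounds res Xa by (intro power_bound_wave_max) (simp_all add: max_def)
  next
    case 2
    then show ?thesis
      using bounds res Xc by (intro power_bound_high_max) (simp_all add: max_def)
  next
    case 3
    then have "max L1 (max L2 L) = L1"
      by simp
    with 3 show ?thesis
      using bounds res Xa Xb Xc by (intro power_bound_low_max) simp_all
  qed
qed

lemma power_bound_mixed_scales:
  fixes X N N2 P :: real
  assumes "X ^ 6 * N2 ^ 8 \<le> 32768 ^ 6 * 48 ^ 5 * P" "0 \<le> P" "0 < N2" "0 < N" "N \<le> 6 * N2"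
  shows "X ^ 6 * (N ^ 6 * N2\<^sup>2) \<le> 4096 ^ 12 * P"
proof -
  have "N ^ 6 \<le> (6 * N2) ^ 6"
    using assms by (intro power_mono) auto
  then have NM: "N ^ 6 * N2\<^sup>2 \<le> 6 ^ 6 * N2 ^ 8"
    using mult_right_mono[of "N ^ 6" "(6 * N2) ^ 6" "N2\<^sup>2"]
    by (simp add: power_mult_distrib mult.assoc flip: power_add)
  have "X ^ 6 * (N ^ 6 * N2\<^sup>2) * N2 ^ 8 = (X ^ 6 * N2 ^ 8) * (N ^ 6 * N2\<^sup>2)"
    by (simp add: mult_ac)
  also have "\<dots> \<le> (32768 ^ 6 * 48 ^ 5 * P) * (N ^ 6 * N2\<^sup>2)"
    using assms(1) by (intro mult_right_mono) simp_all
  also have "\<dots> \<le> (32768 ^ 6 * 48 ^ 5 * P) * (6 ^ 6 * N2 ^ 8)"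
    using NM assms(2) by (intro mult_left_mono) simp_all
  also have "\<dots> = (6 ^ 6 * 32768 ^ 6 * 48 ^ 5) * P * N2 ^ 8"
    by (simp add: mult_ac)
  also have "\<dots> \<le> 4096 ^ 12 * P * N2 ^ 8"
    using assms(2) by (intro mult_right_mono) simp_all
  finally show ?thesis
    using assms(3) by simp
qed

text \<open>Raising both sides to the 12th power clears the fractional exponents.\<close>

lemma sqrt_le_of_power_bound:
  fixes X N N1 N2 L1 L2 L :: real
  assumes "0 \<le> X" "X ^ 6 * N2 ^ 8 \<le> 32768 ^ 6 * 48 ^ 5 * (L1 * L2 * L) ^ 5 * N1\<^sup>2"
    and "0 < N1" "0 < N2" "0 < L1" "0 < L2" "0 < L" "0 < N" "N \<le> 6 * N2"
  shows "sqrt X \<le> 4096 * L1 powr (5/12) * L2 powr (5/12) * L powr (5/12) * N powr (-1/2) * (N1 / N2) powr (1/6)"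
proof -
  define R where "R = L1 powr (5/12) * L2 powr (5/12) * L powr (5/12) * N powr (-1/2) * (N1 / N2) powr (1/6)"
  have pow12: "(x powr u) ^ 12 = x powr (12 * u)" if "0 < x" for x u :: real
    using powr_power[of x u 12] that by simp
  have "R ^ 12 = L1 powr 5 * L2 powr 5 * L powr 5 * N powr (- 6) * (N1 / N2) powr 2"
    using assms by (simp add: R_def power_mult_distrib pow12)
  also have "\<dots> = (L1 * L2 * L) ^ 5 * N1\<^sup>2 / (N ^ 6 * N2\<^sup>2)"
    using assms by (simp add: powr_minus powr_numeral power_mult_distrib power_divide field_simps)
  finally have R12: "R ^ 12 = (L1 * L2 * L) ^ 5 * N1\<^sup>2 / (N ^ 6 * N2\<^sup>2)" .
  have "X ^ 6 * (N ^ 6 * N2\<^sup>2) \<le> 4096 ^ 12 * ((L1 * L2 * L) ^ 5 * N1\<^sup>2)"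
    using assms by (intro power_bound_mixed_scales) (simp_all add: mult.assoc)
  moreover have "(sqrt X) ^ 12 = X ^ 6"
    using assms power_mult[of "sqrt X" 2 6] by simp
  ultimately have "(sqrt X) ^ 12 \<le> (4096 * R) ^ 12"
    using assms by (simp add: R12 power_mult_distrib field_simps flip: power_mult)
  moreover have "0 \<le> 4096 * R"
    by (simp add: R_def)
  ultimately have "sqrt X \<le> 4096 * R"
    using assms(1) by (subst (asm) power_mono_iff) simp_all
  then show ?thesis
    by (simp add: R_def mult.assoc)
qed

section \<open>The bilinear estimate\<close>

lemma trilinear_abs_sq_le_schr_wave:
  assumes f: "unitL2_supp f (wave_region N s L)" and g1: "unitL2_supp g1 A"
    and g2: "unitL2_supp g2 (schr_region N2 L2)"
    and "1 \<le> N2" "1 \<le> L2" "1 \<le> L" "\<bar>s\<bar> \<le> 1"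
  shows "(trilinear_abs f g1 g2)\<^sup>2 \<le> ennreal (4 * min L2 L * min (32 * N2\<^sup>2) (4096 * (L2 + L)))"
proof -
  have "(trilinear_abs f g1 g2)\<^sup>2
      \<le> ennreal (4 * min L2 L * min (32 * N2\<^sup>2) (4096 * (L2 + L))) * sq_L2_norm f * sq_L2_norm g1 * sq_L2_norm g2"
  proof (rule trilinear_abs_sq_le)
    fix \<zeta>1
    have "{\<zeta>2. f (\<zeta>1 - \<zeta>2) \<noteq> 0 \<and> g2 \<zeta>2 \<noteq> 0} \<subseteq> {\<zeta>2. \<zeta>2 \<in> schr_region N2 L2 \<and> \<zeta>1 - \<zeta>2 \<in> wave_region N s L}"
      using unitL2_suppD(3)[OF f] unitL2_suppD(3)[OF g2] by blast
    then show "emeasure lborel {\<zeta>2. f (\<zeta>1 - \<zeta>2) \<noteq> 0 \<and> g2 \<zeta>2 \<noteq> 0}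
        \<le> ennreal (4 * min L2 L * min (32 * N2\<^sup>2) (4096 * (L2 + L)))"
      using unitL2_suppD(1)[OF f] unitL2_suppD(1)[OF g2] assms
      by (intro order_trans[OF emeasure_mono emeasure_schr_wave_fiber]) simp_all
  qed (use unitL2_suppD(1) f g1 g2 in auto)
  then show ?thesis
    using unitL2_suppD(2) f g1 g2 by simp
qed

lemma trilinear_abs_sq_le_schr_schr:
  assumes f: "unitL2_supp f A" and g1: "unitL2_supp g1 (schr_region N1 L1)"
    and g2: "unitL2_supp g2 (schr_region N2 L2)"
    and "1 \<le> N1" "64 * N1 \<le> N2" "1 \<le> L1" "1 \<le> L2"
  shows "(trilinear_abs f g1 g2)\<^sup>2 \<le> ennreal (4 * min L1 L2 * min (32 * N1\<^sup>2) (128 * N1 * (L1 + L2) / N2))"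
proof -
  note meas [measurable] = unitL2_suppD(1)[OF f] unitL2_suppD(1)[OF g1] unitL2_suppD(1)[OF g2]
  have "(trilinear_abs (\<lambda>x. g2 (- x)) f g1)\<^sup>2 \<le> ennreal (4 * min L1 L2 * min (32 * N1\<^sup>2) (128 * N1 * (L1 + L2) / N2))
      * sq_L2_norm (\<lambda>x. g2 (- x)) * sq_L2_norm f * sq_L2_norm g1"
  proof (rule trilinear_abs_sq_le)
    fix \<zeta>
    have "{\<zeta>1. g2 (- (\<zeta> - \<zeta>1)) \<noteq> 0 \<and> g1 \<zeta>1 \<noteq> 0} \<subseteq> {\<zeta>1. \<zeta>1 \<in> schr_region N1 L1 \<and> \<zeta>1 - \<zeta> \<in> schr_region N2 L2}"
      using unitL2_suppD(3)[OF g1] unitL2_suppD(3)[OF g2] by fastforce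
    then show "emeasure lborel {\<zeta>1. g2 (- (\<zeta> - \<zeta>1)) \<noteq> 0 \<and> g1 \<zeta>1 \<noteq> 0}
        \<le> ennreal (4 * min L1 L2 * min (32 * N1\<^sup>2) (128 * N1 * (L1 + L2) / N2))"
      using assms by (intro order_trans[OF emeasure_mono emeasure_schr_schr_fiber]) simp_all
  qed simp_all
  then show ?thesis
    using unitL2_suppD(2) f g1 g2 by (simp add: trilinear_abs_rotate[of f g1 g2] sq_L2_norm_reflect)
qed

lemma trilinear_abs_sq_le_low_high:
  assumes f: "unitL2_supp f (wave_region N s L)" and g1: "unitL2_supp g1 (schr_region N1 L1)"
    and g2: "unitL2_supp g2 (schr_region N2 L2)"
    and ge1: "1 \<le> N1" "1 \<le> L" "1 \<le> L1" "1 \<le> L2" "\<bar>s\<bar> \<le> 1" and "64 * N1 \<le> N2"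
  shows "(trilinear_abs f g1 g2)\<^sup>2 \<le> ennreal (4 * min L1 L2 * min (32 * N1\<^sup>2) (128 * N1 * (L1 + L2) / N2))"
    and "(trilinear_abs f g1 g2)\<^sup>2 \<le> ennreal (4 * min L2 L * min (32 * N2\<^sup>2) (4096 * (L2 + L)))"
    and "(trilinear_abs f g1 g2)\<^sup>2 \<le> ennreal (4 * min L1 L * min (32 * N1\<^sup>2) (4096 * (L1 + L)))"
proof -
  show "(trilinear_abs f g1 g2)\<^sup>2 \<le> ennreal (4 * min L1 L2 * min (32 * N1\<^sup>2) (128 * N1 * (L1 + L2) / N2))"
    using assms by (intro trilinear_abs_sq_le_schr_schr)
  show "(trilinear_abs f g1 g2)\<^sup>2 \<le> ennreal (4 * min L2 L * min (32 * N2\<^sup>2) (4096 * (L2 + L)))"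
    using assms by (intro trilinear_abs_sq_le_schr_wave) simp_all
  have "unitL2_supp (\<lambda>z. f (- z)) (wave_region N (- s) L)"
    using f by (rule unitL2_supp_reflect) (simp add: uminus_in_wave_region)
  then have "(trilinear_abs (\<lambda>x. f (- x)) g2 g1)\<^sup>2 \<le> ennreal (4 * min L1 L * min (32 * N1\<^sup>2) (4096 * (L1 + L)))"
    using g1 g2 ge1 by (intro trilinear_abs_sq_le_schr_wave[where s="- s"]) simp_all
  then show "(trilinear_abs f g1 g2)\<^sup>2 \<le> ennreal (4 * min L1 L * min (32 * N1\<^sup>2) (4096 * (L1 + L)))"
    using unitL2_suppD(1) f g1 g2 by (simp add: trilinear_abs_swap[of f g1 g2])
qed

lemma trilinear_abs_low_high:
  assumes dyadic: "dyadic N" "dyadic N1" "dyadic N2" "dyadic L" "dyadic L1" "dyadic L2"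
    and s: "s = 1 \<or> s = -1" and low_high: "64 * N1 \<le> N2"
    and f: "unitL2_supp f (Pset N \<inter> Wset s L)" and g1: "unitL2_supp g1 (Pset N1 \<inter> Sset L1)"
    and g2: "unitL2_supp g2 (Pset N2 \<inter> Sset L2)"
  shows "trilinear_abs f g1 g2
    \<le> ennreal (4096 * L1 powr (5/12) * L2 powr (5/12) * L powr (5/12) * N powr (-1/2) * (N1 / N2) powr (1/6))"
proof (cases "trilinear_abs f g1 g2 = 0")
  case False
  have ge1: "1 \<le> N" "1 \<le> N1" "1 \<le> N2" "1 \<le> L" "1 \<le> L1" "1 \<le> L2" "\<bar>s\<bar> \<le> 1"
    using dyadic dyadic_ge_1 s by auto
  have f': "unitL2_supp f (wave_region N s L)"
    using f Pset_Wset_subset dyadic by (blast intro: unitL2_supp_mono)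
  have g1': "unitL2_supp g1 (schr_region N1 L1)" and g2': "unitL2_supp g2 (schr_region N2 L2)"
    using g1 g2 Pset_Sset_subset dyadic by (blast intro: unitL2_supp_mono)+
  obtain \<zeta>1 \<zeta>2 where "f (\<zeta>1 - \<zeta>2) \<noteq> 0" "g1 \<zeta>1 \<noteq> 0" "g2 \<zeta>2 \<noteq> 0"
    using False by (rule trilinear_abs_nonzero)
  then have res: "N2\<^sup>2 \<le> 48 * max L1 (max L2 L)" and "N \<le> 6 * N2"
    using low_high_resonance[of \<zeta>1 N1 L1 \<zeta>2 N2 L2 N s L] unitL2_suppD(3) f' g1' g2' ge1 low_high by blast+
  note K = trilinear_abs_sq_le_low_high[OF f' g1' g2' ge1(2,4,5,6,7) low_high]
  obtain Y where Y: "trilinear_abs f g1 g2 = ennreal Y" "0 \<le> Y"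
  proof (cases "trilinear_abs f g1 g2" rule: ennreal_cases)
    case top
    with K(2) show ?thesis
      by (simp add: power2_eq_square top_unique)
  qed simp
  have "Y\<^sup>2 \<le> 4 * min L1 L2 * min (32 * N1\<^sup>2) (128 * N1 * (L1 + L2) / N2)"
    "Y\<^sup>2 \<le> 4 * min L2 L * min (32 * N2\<^sup>2) (4096 * (L2 + L))"
    "Y\<^sup>2 \<le> 4 * min L1 L * min (32 * N1\<^sup>2) (4096 * (L1 + L))"
    using K ge1 Y by (simp_all add: ennreal_power)
  then have "(Y\<^sup>2) ^ 6 * N2 ^ 8 \<le> 32768 ^ 6 * 48 ^ 5 * (L1 * L2 * L) ^ 5 * N1\<^sup>2"
    using ge1 low_high res by (intro power_bound_three_modulations) simp_all
  then have "sqrt (Y\<^sup>2) \<le> 4096 * L1 powr (5/12) * L2 powr (5/12) * L powr (5/12) * N powr (-1/2) * (N1 / N2) powr (1/6)"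
    using ge1 \<open>N \<le> 6 * N2\<close> by (intro sqrt_le_of_power_bound) simp_all
  then show ?thesis
    using Y by (simp add: ennreal_leI)
qed simp

lemma trilinear_abs_le:
  assumes "dyadic N" "dyadic N1" "dyadic N2" "dyadic L" "dyadic L1" "dyadic L2"
    and s: "s = 1 \<or> s = -1" and separated: "64 * N1 \<le> N2 \<or> 64 * N2 \<le> N1"
    and f: "unitL2_supp f (Pset N \<inter> Wset s L)" and g1: "unitL2_supp g1 (Pset N1 \<inter> Sset L1)"
    and g2: "unitL2_supp g2 (Pset N2 \<inter> Sset L2)"
  shows "trilinear_abs f g1 g2 \<le> ennreal (4096 * L1 powr (5/12) * L2 powr (5/12) * L powr (5/12)
    * N powr (-1/2) * (min (N1 / N2) (N2 / N1)) powr (1/6))"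
proof -
  have pos: "0 < N1" "0 < N2"
    using assms dyadic_ge_1 by fastforce+
  show ?thesis
  proof (cases "64 * N1 \<le> N2")
    case True
    then have "N1 / N2 \<le> 1" "1 \<le> N2 / N1"
      using pos by (simp_all add: field_simps)
    then have "min (N1 / N2) (N2 / N1) = N1 / N2"
      by simp
    then show ?thesis
      using assms True trilinear_abs_low_high[of N N1 N2 L L1 L2 s f g1 g2] by simp
  next
    case False
    then have "64 * N2 \<le> N1"
      using separated by simp
    moreover from this have "N2 / N1 \<le> 1" "1 \<le> N1 / N2"
      using pos by (simp_all add: field_simps)
    then have "min (N1 / N2) (N2 / N1) = N2 / N1"
      by simp
    moreover have "unitL2_supp (\<lambda>z. f (- z)) (Pset N \<inter> Wset (- s) L)"
      using f uminus_in_Pset_Wset by (blast intro: unitL2_supp_reflect)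
    ultimately show ?thesis
      using assms unitL2_suppD(1) trilinear_abs_low_high[of N N2 N1 L L2 L1 "- s" "\<lambda>z. f (- z)" g2 g1]
      by (auto simp: trilinear_abs_swap[of f g1 g2] mult_ac)
  qed
qed

lemma norm_trilinear_integral_le:
  assumes "dyadic N" "dyadic N1" "dyadic N2" "dyadic L" "dyadic L1" "dyadic L2"
    and "s = 1 \<or> s = -1" "64 * N1 \<le> N2 \<or> 64 * N2 \<le> N1"
    and "unitL2_supp f (Pset N \<inter> Wset s L)" "unitL2_supp g1 (Pset N1 \<inter> Sset L1)"
    and "unitL2_supp g2 (Pset N2 \<inter> Sset L2)"
  shows "norm (\<integral> z. f (fst z - snd z) * g1 (fst z) * g2 (snd z) \<partial>(lborel \<Otimes>\<^sub>M lborel))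
    \<le> 4096 * L1 powr (5/12) * L2 powr (5/12) * L powr (5/12) * N powr (-1/2)
      * (min (N1 / N2) (N2 / N1)) powr (1/6)"
  using order_trans[OF norm_integral_le_trilinear_abs trilinear_abs_le[OF assms]] by simp

theorem proposition4p8:
  shows "\<exists>c>0. \<exists>C. \<forall>N N1 N2 L L1 L2 s f g1 g2.
    dyadic N \<and> dyadic N1 \<and> dyadic N2 \<and> dyadic L \<and> dyadic L1 \<and> dyadic L2
    \<and> (s = 1 \<or> s = -1)
    \<and> (N1 \<le> c * N2 \<or> N2 \<le> c * N1)
    \<and> unitL2_supp f (Pset N \<inter> Wset s L)
    \<and> unitL2_supp g1 (Pset N1 \<inter> Sset L1)
    \<and> unitL2_supp g2 (Pset N2 \<inter> Sset L2)
    \<longrightarrow> norm (\<integral> z. f (fst z - snd z) * g1 (fst z) * g2 (snd z) \<partial>(lborel \<Otimes>\<^sub>M lborel))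
        \<le> C * L1 powr (5/12) * L2 powr (5/12) * L powr (5/12) * N powr (-1/2)
            * (min (N1 / N2) (N2 / N1)) powr (1/6)"
  by (rule exI[of _ "1/64"], rule conjI, simp, intro exI[of _ 4096] allI impI, elim conjE,
      rule norm_trilinear_integral_le) auto

end
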